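(* Let $\mathbf{u}$ be quasi-definite with SMOP $(P_n)$, $c\in\mathbb{C}$ with $P_n(c)\ne0$ for all $n$, and $\widetilde{\mathbf{u}}=(x-c)\mathbf{u}$ with associated polynomials of the first kind $(\widetilde P^{(1)}_n)$. Let $\mathbf{u}^\alpha$ be a quasi-definite functional whose SMOP is $R_n(x)=\frac{\mathbf{u}_0}{\widetilde{\mathbf{u}}_0}\big[(x-c)P^{(1)}_n(x)-P_{n+1}(x)\big]$, $n\ge0$. Then $(\widetilde P^{(1)}_n)_{n\ge0}$ is the SMOP of $(x-c)\mathbf{u}^\alpha$; i.e., up to a nonzero constant factor, $\widetilde{\mathbf{u}}^{(1)}=(x-c)\mathbf{u}^\alpha$ is a canonical Christoffel transformation of $\mathbf{u}^\alpha$.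
   Context: Linear functionals on complex polynomials, moments $\mathbf{u}_n$, $\langle(x-c)\mathbf{u},p\rangle=\langle\mathbf{u},(x-c)p\rangle$. Quasi-definite: all leading principal Hankel minors nonzero; SMOP = sequence of monic orthogonal polynomials, satisfying $xP_n=P_{n+1}+b_nP_n+a_nP_{n-1}$, $P_{-1}=0$, $P_0=1$, $a_n\neq0$. Associated polynomials of the first kind: monic, $xP^{(1)}_n=P^{(1)}_{n+1}+b_{n+1}P^{(1)}_n+a_{n+1}P^{(1)}_{n-1}$, $P^{(1)}_{-1}=0,P^{(1)}_0=1$; $\widetilde{\mathbf{u}}^{(1)}$ is a functional with SMOP $(\widetilde P^{(1)}_n)$. (The polynomials $R_n$ are monic of degree $n$ and satisfy a three-term recurrence with nonzero coefficients, so such $\mathbf{u}^\alpha$ exists.) *)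

theory Defs
  imports Complex_Main "HOL-Computational_Algebra.Polynomial" "Jordan_Normal_Form.Determinant"
begin

(* A linear functional u on complex polynomials is represented by its moment
   sequence: u n = <u, x^n>. *)
type_synonym functional = "nat \<Rightarrow> complex"

definition fapp :: "functional \<Rightarrow> complex poly \<Rightarrow> complex" where
  "fapp u p = (\<Sum>i\<le>degree p. coeff p i * u i)"

(* (x - c) u : <(x-c)u, p> = <u, (x-c)p>; on moments: u (n+1) - c u n *)
definition mult_xc :: "complex \<Rightarrow> functional \<Rightarrow> functional" where
  "mult_xc c u = (\<lambda>n. u (Suc n) - c * u n)"

definition hankel :: "functional \<Rightarrow> nat \<Rightarrow> complex mat" where
  "hankel u n = mat (Suc n) (Suc n) (\<lambda>(i, j). u (i + j))"

definition quasi_definite :: "functional \<Rightarrow> bool" where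
  "quasi_definite u \<longleftrightarrow> (\<forall>n. det (hankel u n) \<noteq> 0)"

definition is_SMOP :: "functional \<Rightarrow> (nat \<Rightarrow> complex poly) \<Rightarrow> bool" where
  "is_SMOP u P \<longleftrightarrow>
     (\<forall>n. degree (P n) = n \<and> lead_coeff (P n) = 1) \<and>
     (\<forall>n m. n \<noteq> m \<longrightarrow> fapp u (P n * P m) = 0) \<and>
     (\<forall>n. fapp u (P n * P n) \<noteq> 0)"

(* Polynomials generated by x p_n = p_{n+1} + b_n p_n + a_n p_{n-1}, p_{-1} = 0, p_0 = 1 *)
fun ttr :: "(nat \<Rightarrow> complex) \<Rightarrow> (nat \<Rightarrow> complex) \<Rightarrow> nat \<Rightarrow> complex poly" where
  "ttr b a 0 = 1"
| "ttr b a (Suc 0) = [:- b 0, 1:]"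
| "ttr b a (Suc (Suc n)) = [:- b (Suc n), 1:] * ttr b a (Suc n) - smult (a (Suc n)) (ttr b a n)"

(* Associated polynomials of the first kind: shifted coefficients b_{n+1}, a_{n+1} *)
definition assoc1 :: "(nat \<Rightarrow> complex) \<Rightarrow> (nat \<Rightarrow> complex) \<Rightarrow> nat \<Rightarrow> complex poly" where
  "assoc1 b a = ttr (\<lambda>n. b (Suc n)) (\<lambda>n. a (Suc n))"

end

theory Submission
  imports Defs
begin

(* Write r_n = P_{n+1}(c) / P_n(c).  The Christoffel formula (x - c) Pt_n = P_{n+1} - r_n P_n
   determines the recurrence coefficients of (Pt_n) in terms of b, a and r.  The sequence
   D_n = (x - c) P^(1)_n - P_{n+1} (with D_{-1} = -1) obeys the recurrence of (P_n), so
   D_{n+1} - r_{n+1} D_n obeys the same recurrence as (x - c) Pt_{n+1}; comparing initial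
   values yields (x - c) Pt^(1)_n = R_{n+1} - r_{n+1} R_n.  Hence (x - c) v annihilates
   Pt^(1)_n exactly for n >= 1, and a Favard-type argument on the moments of (x - c) v
   against the three-term recurrence of (Pt^(1)_n) shows that it is the SMOP of (x - c) v. *)

lemma fapp_eq_sum_atMost: "degree p \<le> N \<Longrightarrow> fapp u p = (\<Sum>i\<le>N. coeff p i * u i)"
  unfolding fapp_def by (rule sum.mono_neutral_left) (auto simp: coeff_eq_0)

lemma fapp_add: "fapp u (p + q) = fapp u p + fapp u q"
proof -
  let ?N = "max (degree p) (degree q)"
  have "degree (p + q) \<le> ?N" by (simp add: degree_add_le)
  then show ?thesis
    by (simp add: fapp_eq_sum_atMost[of _ ?N] sum.distrib distrib_right)
qed

lemma fapp_smult: "fapp u (smult k p) = k * fapp u p"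
  unfolding fapp_def by (simp add: sum_distrib_left mult.assoc)

lemma fapp_diff: "fapp u (p - q) = fapp u p - fapp u q"
  using fapp_add[of u p "- q"] fapp_smult[of u "- 1" q] by simp

lemma fapp_0 [simp]: "fapp u 0 = 0"
  by (simp add: fapp_def)

lemma fapp_one: "fapp u 1 = u 0"
  by (simp add: fapp_def)

lemma fapp_pCons_0: "fapp u (pCons 0 p) = fapp (\<lambda>n. u (Suc n)) p"
proof -
  have "fapp u (pCons 0 p) = (\<Sum>i\<le>Suc (degree p). coeff (pCons 0 p) i * u i)"
    by (rule fapp_eq_sum_atMost) (simp add: degree_pCons_le)
  also have "\<dots> = (\<Sum>i\<le>degree p. coeff p i * u (Suc i))"
    by (subst sum.atMost_Suc_shift) simp
  finally show ?thesis by (simp add: fapp_def)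
qed

lemma fapp_mult_xc: "fapp (mult_xc c u) p = fapp u ([:- c, 1:] * p)"
proof -
  have "[:- c, 1:] * p = smult (- c) p + pCons 0 p" by simp
  then have "fapp u ([:- c, 1:] * p) = - c * fapp u p + fapp (\<lambda>n. u (Suc n)) p"
    by (simp only: fapp_add fapp_smult fapp_pCons_0)
  also have "\<dots> = fapp (mult_xc c u) p"
    unfolding fapp_def mult_xc_def
    by (simp add: sum_distrib_left sum.distrib[symmetric] algebra_simps)
  finally show ?thesis by simp
qed

lemma degree_less_if_coeff_eq_0: "degree q \<le> m \<Longrightarrow> coeff q m = 0 \<Longrightarrow> q = 0 \<or> degree q < m"
  by (metis le_neq_implies_less leading_coeff_0_iff)

lemma degree_diff_eq_left:
  fixes p q :: "'a::ab_group_add poly"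
  shows "degree q < degree p \<Longrightarrow> degree (p - q) = degree p"
  using degree_add_eq_left[of "- q" p] by simp

lemma degree_linear_mult:
  fixes p :: "'a::idom poly"
  shows "p \<noteq> 0 \<Longrightarrow> degree ([:- c, 1:] * p) = Suc (degree p)"
  using degree_mult_eq[of "[:- c, 1:]" p] by (simp del: mult_pCons_left)

lemma degree_ttr: "degree (ttr b a n) = n" and coeff_ttr: "coeff (ttr b a n) n = 1"
proof -
  have "degree (ttr b a n) = n \<and> coeff (ttr b a n) n = 1"
  proof (induction b a n rule: ttr.induct)
    case (3 b a n)
    let ?p = "ttr b a (Suc n)" and ?q = "ttr b a n"
    have deg: "degree ([:- b (Suc n), 1:] * ?p) = Suc (Suc n)"
      using 3 by (subst degree_mult_eq) auto
    have "[:- b (Suc n), 1:] * ?p = smult (- b (Suc n)) ?p + pCons 0 ?p"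
      by simp
    then have lc: "coeff ([:- b (Suc n), 1:] * ?p) (Suc (Suc n)) = 1"
      using 3 by (simp add: coeff_eq_0)
    have "degree (smult (a (Suc n)) ?q) < Suc (Suc n)"
      using 3 le_less_trans[OF degree_smult_le] by simp
    then have "degree (ttr b a (Suc (Suc n))) = Suc (Suc n)"
      using deg by (simp only: ttr.simps degree_diff_eq_left)
    moreover have "coeff (ttr b a (Suc (Suc n))) (Suc (Suc n)) = 1"
      using lc 3 by (simp add: coeff_eq_0)
    ultimately show ?case by blast
  qed simp_all
  then show "degree (ttr b a n) = n" "coeff (ttr b a n) n = 1" by simp_all
qed

lemma ttr_nonzero: "ttr b a n \<noteq> 0"
  using coeff_ttr[of b a n] by auto

lemma fapp_orthogonal_if_basis_orthogonal:
  assumes basis: "\<And>k. degree (B k) = k \<and> lead_coeff (B k) = 1"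
    and orth: "\<And>k. k < n \<Longrightarrow> fapp w (B k * q) = 0"
  shows "degree p < n \<Longrightarrow> fapp w (p * q) = 0"
proof (induction "degree p" arbitrary: p rule: less_induct)
  case less
  let ?m = "degree p"
  define p' where "p' = p - smult (lead_coeff p) (B ?m)"
  have "degree p' \<le> ?m" "coeff p' ?m = 0"
    using basis[of ?m] degree_smult_le[of "lead_coeff p" "B ?m"]
    by (auto simp: p'_def intro: degree_diff_le)
  then consider "p' = 0" | "degree p' < ?m"
    using degree_less_if_coeff_eq_0 by blast
  then have "fapp w (p' * q) = 0"
    by cases (use less in auto)
  moreover have "fapp w (p * q) = lead_coeff p * fapp w (B ?m * q) + fapp w (p' * q)"
    by (simp add: p'_def algebra_simps fapp_diff fapp_smult)
  ultimately show ?case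
    using orth less.prems by simp
qed

lemma SMOP_orthogonal:
  assumes "is_SMOP w S" "degree p < n"
  shows "fapp w (p * S n) = 0"
proof (rule fapp_orthogonal_if_basis_orthogonal[of S n])
  show "degree (S k) = k \<and> lead_coeff (S k) = 1" for k
    using assms(1) unfolding is_SMOP_def by blast
  show "fapp w (S k * S n) = 0" if "k < n" for k
    using assms(1) that unfolding is_SMOP_def by simp
qed (fact assms(2))

lemma fapp_mult_SMOP:
  assumes S: "is_SMOP w S" and "degree p \<le> m"
  shows "fapp w (p * S m) = coeff p m * fapp w (S m * S m)"
proof -
  define p' where "p' = p - smult (coeff p m) (S m)"
  have "degree (S m) = m" "coeff (S m) m = 1"
    using S unfolding is_SMOP_def by metis+
  then have "degree p' \<le> m" "coeff p' m = 0"
    using assms(2) degree_smult_le[of "coeff p m" "S m"] by (simp_all add: p'_def degree_diff_le)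
  then have "fapp w (p' * S m) = 0"
    using degree_less_if_coeff_eq_0 SMOP_orthogonal[OF S] by fastforce
  then show ?thesis
    by (simp add: p'_def algebra_simps fapp_diff fapp_smult)
qed

lemma SMOP_unique:
  assumes S: "is_SMOP w S" and q: "degree q = n" "lead_coeff q = 1"
    and orth: "\<And>p. degree p < n \<Longrightarrow> fapp w (p * q) = 0"
  shows "q = S n"
proof (rule ccontr)
  assume "q \<noteq> S n"
  define d where "d = q - S n"
  define m where "m = degree d"
  have "degree (S n) = n" "coeff (S n) n = 1"
    using S unfolding is_SMOP_def by metis+
  then have "degree d \<le> n" "coeff d n = 0" "d \<noteq> 0"
    using q \<open>q \<noteq> S n\<close> by (simp_all add: d_def degree_diff_le)
  then have "m < n"
    using degree_less_if_coeff_eq_0 m_def by blast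
  have "fapp w (q * S m) = 0"
    using orth[of "S m"] S \<open>m < n\<close> unfolding is_SMOP_def by (simp add: mult.commute)
  moreover have "fapp w (S n * S m) = 0"
    using S \<open>m < n\<close> unfolding is_SMOP_def by simp
  ultimately have "fapp w (d * S m) = 0"
    by (simp add: d_def left_diff_distrib fapp_diff)
  moreover have "fapp w (d * S m) = lead_coeff d * fapp w (S m * S m)"
    unfolding m_def by (rule fapp_mult_SMOP[OF S order.refl])
  ultimately show False
    using S \<open>d \<noteq> 0\<close> unfolding is_SMOP_def by simp
qed

lemma SMOP_0: "is_SMOP w S \<Longrightarrow> S 0 = 1"
  unfolding is_SMOP_def by (metis degree_0_id one_pCons)

lemma fapp_SMOP_eq_0_iff: "is_SMOP w S \<Longrightarrow> fapp w (S k) = 0 \<longleftrightarrow> k \<noteq> 0"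
  using SMOP_0[of w S] unfolding is_SMOP_def by (metis mult.right_neutral)

definition ttr_recurrence ::
    "(nat \<Rightarrow> complex) \<Rightarrow> (nat \<Rightarrow> complex) \<Rightarrow> (nat \<Rightarrow> complex poly) \<Rightarrow> bool"
  where "ttr_recurrence b a Y \<longleftrightarrow>
    (\<forall>n. Y (Suc (Suc n)) = [:- b (Suc n), 1:] * Y (Suc n) - smult (a (Suc n)) (Y n))"

lemma ttr_recurrence_ttr: "ttr_recurrence b a (ttr b a)"
  by (simp add: ttr_recurrence_def)

lemma ttr_recurrence_mult:
  "ttr_recurrence b a Y \<Longrightarrow> ttr_recurrence b a (\<lambda>n. p * Y n)"
  unfolding ttr_recurrence_def by (metis mult.left_commute mult_smult_right right_diff_distrib)

lemma ttr_recurrence_diff: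
  "ttr_recurrence b a Y \<Longrightarrow> ttr_recurrence b a Z \<Longrightarrow> ttr_recurrence b a (\<lambda>n. Y n - Z n)"
  unfolding ttr_recurrence_def by (simp add: right_diff_distrib smult_diff_right)

lemma ttr_recurrence_shift:
  "ttr_recurrence b a Y \<Longrightarrow>
    ttr_recurrence (\<lambda>n. b (Suc n)) (\<lambda>n. a (Suc n)) (\<lambda>n. Y (Suc n))"
  unfolding ttr_recurrence_def by simp

lemma ttr_recurrence_eq_ttr:
  assumes rec: "ttr_recurrence b a Y" and Y1: "Y 1 = [:- b 0, 1:] * Y 0"
  shows "Y n = Y 0 * ttr b a n"
proof -
  have "Y n = Y 0 * ttr b a n \<and> Y (Suc n) = Y 0 * ttr b a (Suc n)"
  proof (induction n)
    case 0
    then show ?case using Y1 by simp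
  next
    case (Suc n)
    have "Y (Suc (Suc n)) = [:- b (Suc n), 1:] * Y (Suc n) - smult (a (Suc n)) (Y n)"
      using rec unfolding ttr_recurrence_def by blast
    also have "\<dots> = Y 0 * ([:- b (Suc n), 1:] * ttr b a (Suc n) - smult (a (Suc n)) (ttr b a n))"
      unfolding Suc.IH[THEN conjunct1] Suc.IH[THEN conjunct2]
      by (simp only: mult.left_commute mult_smult_right right_diff_distrib)
    finally show ?case
      using Suc.IH by (simp only: ttr.simps)
  qed
  then show ?thesis ..
qed

lemma ttr_recurrence_coeffs_unique:
  assumes "ttr_recurrence b a Y" "ttr_recurrence b' a' Y"
    and deg: "degree (Y n) < degree (Y (Suc n))" and nz: "Y n \<noteq> 0"
  shows "b (Suc n) = b' (Suc n) \<and> a (Suc n) = a' (Suc n)"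
proof -
  have "[:- b (Suc n), 1:] * Y (Suc n) - smult (a (Suc n)) (Y n)
      = [:- b' (Suc n), 1:] * Y (Suc n) - smult (a' (Suc n)) (Y n)"
    using assms(1,2) unfolding ttr_recurrence_def by metis
  then have eq: "smult (b' (Suc n) - b (Suc n)) (Y (Suc n)) = smult (a (Suc n) - a' (Suc n)) (Y n)"
    by (simp add: algebra_simps smult_diff_left)
  have "b (Suc n) = b' (Suc n)"
  proof (rule ccontr)
    assume "b (Suc n) \<noteq> b' (Suc n)"
    then have "degree (Y (Suc n)) \<le> degree (Y n)"
      using arg_cong[OF eq, of degree] degree_smult_le[of "a (Suc n) - a' (Suc n)" "Y n"] by simp
    with deg show False by simp
  qed
  with eq nz show ?thesis by simp
qed

lemma ttr_recurrence_assoc1: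
  "ttr_recurrence b a (\<lambda>k. case k of 0 \<Rightarrow> 0 | Suc j \<Rightarrow> assoc1 b a j)"
  unfolding ttr_recurrence_def
proof
  fix n
  show "(case Suc (Suc n) of 0 \<Rightarrow> 0 | Suc j \<Rightarrow> assoc1 b a j) =
    [:- b (Suc n), 1:] * (case Suc n of 0 \<Rightarrow> 0 | Suc j \<Rightarrow> assoc1 b a j) -
    smult (a (Suc n)) (case n of 0 \<Rightarrow> 0 | Suc j \<Rightarrow> assoc1 b a j)"
    by (cases n) (simp_all add: assoc1_def)
qed

lemma christoffel_step_identity:
  fixes x y0 y1 y2 y3 b1 b2 r0 r1 r2 c :: "'a::comm_ring_1"
  assumes "y2 = (x - b1) * y1 - r0 * (c - b1 - r1) * y0"
    and "y3 = (x - b2) * y2 - r1 * (c - b2 - r2) * y1"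
  shows "y3 - r2 * y2 = (x - (b2 + r2 - r1)) * (y2 - r1 * y1) - r1 * (c - b1 - r1) * (y1 - r0 * y0)"
  unfolding assms(2) unfolding assms(1) by (simp add: algebra_simps)

lemma ttr_recurrence_christoffel:
  assumes rec: "ttr_recurrence b a Y"
    and a: "\<And>n. a (Suc n) = r n * (c - b (Suc n) - r (Suc n))"
  shows "ttr_recurrence (\<lambda>n. b (Suc n) + r (Suc n) - r n) (\<lambda>n. r n * (c - b n - r n))
    (\<lambda>n. Y (Suc n) - smult (r n) (Y n))"
  unfolding ttr_recurrence_def
proof
  fix n
  let ?b1 = "b (Suc n)" and ?b2 = "b (Suc (Suc n))"
    and ?r0 = "r n" and ?r1 = "r (Suc n)" and ?r2 = "r (Suc (Suc n))"
  have "Y (Suc (Suc (Suc n))) - [:?r2:] * Y (Suc (Suc n)) =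
    ([:0, 1:] - ([:?b2:] + [:?r2:] - [:?r1:])) * (Y (Suc (Suc n)) - [:?r1:] * Y (Suc n)) -
    [:?r1:] * ([:c:] - [:?b1:] - [:?r1:]) * (Y (Suc n) - [:?r0:] * Y n)"
    by (rule christoffel_step_identity)
      (use rec[unfolded ttr_recurrence_def] a in \<open>simp_all add: mult.commute\<close>)
  then show "Y (Suc (Suc (Suc n))) - smult ?r2 (Y (Suc (Suc n))) =
    [:- (?b2 + ?r2 - ?r1), 1:] * (Y (Suc (Suc n)) - smult ?r1 (Y (Suc n))) -
    smult (?r1 * (c - ?b1 - ?r1)) (Y (Suc n) - smult ?r0 (Y n))"
    by (simp add: mult.commute)
qed

lemma fapp_monomial_ttr:
  assumes \<alpha>: "\<And>n. \<alpha> (Suc n) \<noteq> 0"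
    and vanish: "\<And>n. n \<noteq> 0 \<Longrightarrow> fapp w (ttr \<beta> \<alpha> n) = 0" and w0: "w 0 \<noteq> 0"
  shows "k < n \<Longrightarrow> fapp w ([:0, 1:] ^ k * ttr \<beta> \<alpha> n) = 0"
    and "fapp w ([:0, 1:] ^ n * ttr \<beta> \<alpha> n) \<noteq> 0"
proof -
  define M where "M k n = fapp w ([:0, 1:] ^ k * ttr \<beta> \<alpha> n)" for k n
  let ?T = "ttr \<beta> \<alpha>"
  have M_rec: "M (Suc k) (Suc n) =
      M k (Suc (Suc n)) + \<beta> (Suc n) * M k (Suc n) + \<alpha> (Suc n) * M k n" for k n
  proof -
    have "[:0, 1:] * ?T (Suc n) =
        ?T (Suc (Suc n)) + smult (\<beta> (Suc n)) (?T (Suc n)) + smult (\<alpha> (Suc n)) (?T n)"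
      by simp
    then have "[:0, 1:] ^ Suc k * ?T (Suc n) =
        [:0, 1:] ^ k * (?T (Suc (Suc n)) + smult (\<beta> (Suc n)) (?T (Suc n)) + smult (\<alpha> (Suc n)) (?T n))"
      by (metis mult.assoc power_Suc2)
    then show ?thesis
      unfolding M_def by (simp add: distrib_left fapp_add fapp_smult del: ttr.simps)
  qed
  have M_vanish: "\<forall>n. k < n \<longrightarrow> M k n = 0" for k
  proof (induction k)
    case 0
    then show ?case using vanish by (simp add: M_def)
  next
    case (Suc k)
    show ?case
    proof (intro allI impI)
      fix n
      assume "Suc k < n"
      then obtain n' where "n = Suc n'" "k < n'" by (cases n) auto
      then show "M (Suc k) n = 0" using Suc.IH by (simp add: M_rec)
    qed
  qed
  then show "k < n \<Longrightarrow> fapp w ([:0, 1:] ^ k * ttr \<beta> \<alpha> n) = 0"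
    unfolding M_def by blast
  show "fapp w ([:0, 1:] ^ n * ttr \<beta> \<alpha> n) \<noteq> 0"
    unfolding M_def[symmetric]
  proof (induction n)
    case 0
    then show ?case using w0 by (simp add: M_def fapp_one)
  next
    case (Suc n)
    then show ?case using M_vanish \<alpha> by (simp add: M_rec)
  qed
qed

lemma is_SMOP_ttrI:
  assumes \<alpha>: "\<And>n. \<alpha> (Suc n) \<noteq> 0"
    and vanish: "\<And>n. n \<noteq> 0 \<Longrightarrow> fapp w (ttr \<beta> \<alpha> n) = 0" and w0: "w 0 \<noteq> 0"
  shows "is_SMOP w (ttr \<beta> \<alpha>)"
proof -
  note moments = fapp_monomial_ttr[of \<alpha> w \<beta>, OF assms]
  have orth: "fapp w (p * ttr \<beta> \<alpha> n) = 0" if "degree p < n" for p n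
  proof (rule fapp_orthogonal_if_basis_orthogonal[of "\<lambda>k. [:0, 1:] ^ k" n])
    show "degree ([:0, 1:] ^ k) = k \<and> lead_coeff ([:0::complex, 1:] ^ k) = 1" for k
      by (simp add: degree_linear_power coeff_linear_power)
  qed (use moments(1) that in auto)
  have "fapp w (ttr \<beta> \<alpha> m * ttr \<beta> \<alpha> n) = 0" if "m < n" for m n
    using orth[of "ttr \<beta> \<alpha> m" n] that by (simp add: degree_ttr)
  then have "fapp w (ttr \<beta> \<alpha> m * ttr \<beta> \<alpha> n) = 0" if "m \<noteq> n" for m n
    using that by (metis linorder_neqE_nat mult.commute)
  moreover have "fapp w (ttr \<beta> \<alpha> n * ttr \<beta> \<alpha> n) \<noteq> 0" for n
  proof -
    define q where "q = ttr \<beta> \<alpha> n - [:0, 1:] ^ n"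
    have "degree q \<le> n" "coeff q n = 0"
      by (simp_all add: q_def degree_ttr coeff_ttr degree_linear_power coeff_linear_power degree_diff_le)
    then have "fapp w (q * ttr \<beta> \<alpha> n) = 0"
      using degree_less_if_coeff_eq_0 orth by fastforce
    moreover have "fapp w (ttr \<beta> \<alpha> n * ttr \<beta> \<alpha> n) =
        fapp w ([:0, 1:] ^ n * ttr \<beta> \<alpha> n) + fapp w (q * ttr \<beta> \<alpha> n)"
      by (simp add: q_def algebra_simps fapp_diff)
    ultimately show ?thesis using moments(2) by simp
  qed
  ultimately show ?thesis
    unfolding is_SMOP_def by (simp add: degree_ttr coeff_ttr)
qed

lemma christoffel_kernel:
  assumes SP: "is_SMOP u P" and c: "poly (P n) c \<noteq> 0"
    and SPt: "is_SMOP (mult_xc c u) Pt"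
  shows "[:- c, 1:] * Pt n = P (Suc n) - smult (poly (P (Suc n)) c / poly (P n) c) (P n)"
    (is "_ = ?E")
proof -
  define K where "K = ?E div [:- c, 1:]"
  have "poly ?E c = 0"
    using c by simp
  then have XK: "[:- c, 1:] * K = ?E"
    unfolding K_def poly_eq_0_iff_dvd by (rule dvd_mult_div_cancel)
  have P: "degree (P k) = k" "coeff (P k) k = 1" for k
    using SP unfolding is_SMOP_def by metis+
  have "degree (smult (poly (P (Suc n)) c / poly (P n) c) (P n)) < Suc n"
    using P le_less_trans[OF degree_smult_le] by simp
  then have E: "degree ?E = Suc n" "coeff ?E (Suc n) = 1"
    using P[of "Suc n"] P[of n] by (simp_all add: degree_diff_eq_left coeff_eq_0)
  then have "K \<noteq> 0"
    using XK by auto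
  then have "degree ([:- c, 1:] * K) = Suc (degree K)"
    by (rule degree_linear_mult)
  moreover have "lead_coeff ([:- c, 1:] * K) = lead_coeff K"
    using lead_coeff_mult[of "[:- c, 1:]" K] by (simp del: mult_pCons_left)
  ultimately have "degree K = n" "lead_coeff K = 1"
    using E unfolding XK by simp_all
  moreover have "fapp (mult_xc c u) (p * K) = 0" if "degree p < n" for p
  proof -
    have "fapp (mult_xc c u) (p * K) = fapp u (p * ?E)"
      by (simp add: fapp_mult_xc XK mult.left_commute del: mult_pCons_left)
    also have "\<dots> = 0"
      using SMOP_orthogonal[OF SP, of p] that
      by (simp add: right_diff_distrib fapp_diff fapp_smult)
    finally show ?thesis .
  qed
  ultimately have "K = Pt n"
    by (rule SMOP_unique[OF SPt])
  with XK show ?thesis by simp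
qed

lemma ttr_value_ratio:
  fixes b a :: "nat \<Rightarrow> complex" and c :: complex
  defines "r \<equiv> \<lambda>k. poly (ttr b a (Suc k)) c / poly (ttr b a k) c"
  assumes "poly (ttr b a n) c \<noteq> 0" "poly (ttr b a (Suc n)) c \<noteq> 0"
  shows "a (Suc n) = r n * (c - b (Suc n) - r (Suc n))"
proof -
  have "poly (ttr b a (Suc (Suc n))) c =
      (c - b (Suc n)) * poly (ttr b a (Suc n)) c - a (Suc n) * poly (ttr b a n) c"
    by (simp add: algebra_simps)
  then show ?thesis
    using assms(2,3) unfolding r_def by (simp add: field_simps)
qed

lemma christoffel_ttr_coeffs:
  fixes b a bb aa :: "nat \<Rightarrow> complex" and c :: complex
  defines "r \<equiv> \<lambda>k. poly (ttr b a (Suc k)) c / poly (ttr b a k) c"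
  assumes SP: "is_SMOP u (ttr b a)" and c: "\<And>n. poly (ttr b a n) c \<noteq> 0"
    and SPt: "is_SMOP (mult_xc c u) (ttr bb aa)"
  shows "bb (Suc n) = b (Suc (Suc n)) + r (Suc (Suc n)) - r (Suc n) \<and>
    aa (Suc n) = r (Suc n) * (c - b (Suc n) - r (Suc n))"
proof -
  define E where "E k = [:- c, 1:] * ttr bb aa k" for k
  have "E = (\<lambda>k. ttr b a (Suc k) - smult (r k) (ttr b a k))"
    using christoffel_kernel[OF SP c SPt] unfolding E_def r_def by auto
  moreover have "a (Suc k) = r k * (c - b (Suc k) - r (Suc k))" for k
    unfolding r_def using c[of k] c[of "Suc k"] by (rule ttr_value_ratio)
  ultimately have "ttr_recurrence (\<lambda>k. b (Suc k) + r (Suc k) - r k) (\<lambda>k. r k * (c - b k - r k)) E"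
    using ttr_recurrence_christoffel[OF ttr_recurrence_ttr] by auto
  moreover have "ttr_recurrence bb aa E"
    unfolding E_def by (intro ttr_recurrence_mult ttr_recurrence_ttr)
  moreover have deg: "degree (E k) = Suc k" for k
    unfolding E_def by (simp add: degree_linear_mult ttr_nonzero degree_ttr del: mult_pCons_left)
  moreover have "E n \<noteq> 0"
    using deg[of n] by auto
  ultimately show ?thesis
    using ttr_recurrence_coeffs_unique[of _ _ E bb aa n] by auto
qed

lemma assoc1_christoffel:
  fixes b a bb aa r :: "nat \<Rightarrow> complex" and c :: complex
  defines "D \<equiv> \<lambda>k. [:- c, 1:] * assoc1 b a k - ttr b a (Suc k)"
  assumes a: "\<And>n. a (Suc n) = r n * (c - b (Suc n) - r (Suc n))" and r0: "r 0 = c - b 0"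
    and bb: "\<And>n. bb (Suc n) = b (Suc (Suc n)) + r (Suc (Suc n)) - r (Suc n)"
    and aa: "\<And>n. aa (Suc n) = r (Suc n) * (c - b (Suc n) - r (Suc n))"
  shows "smult (b 0 - c) ([:- c, 1:] * assoc1 bb aa n) = D (Suc n) - smult (r (Suc n)) (D n)"
proof -
  define D' where
    "D' k = [:- c, 1:] * (case k of 0 \<Rightarrow> 0 | Suc j \<Rightarrow> assoc1 b a j) - ttr b a k" for k
  define G where "G k = D' (Suc k) - smult (r k) (D' k)" for k
  have "ttr_recurrence b a D'"
    unfolding D'_def
    by (intro ttr_recurrence_diff ttr_recurrence_mult ttr_recurrence_assoc1 ttr_recurrence_ttr)
  then have recG: "ttr_recurrence (\<lambda>k. b (Suc k) + r (Suc k) - r k) (\<lambda>k. r k * (c - b k - r k)) G"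
    unfolding G_def using a by (rule ttr_recurrence_christoffel)
  then have recGSuc: "ttr_recurrence (\<lambda>k. bb (Suc k)) (\<lambda>k. aa (Suc k)) (\<lambda>k. G (Suc k))"
    using ttr_recurrence_shift[OF recG] by (simp add: bb aa)
  have D'0: "D' 0 = - 1" and D'1: "D' (Suc 0) = [:b 0 - c:]"
    by (simp_all add: D'_def assoc1_def)
  have D'2: "D' (Suc (Suc 0)) = [:- b (Suc 0), 1:] * D' (Suc 0) - smult (a (Suc 0)) (D' 0)"
    using \<open>ttr_recurrence b a D'\<close> unfolding ttr_recurrence_def by blast
  have G0: "G 0 = 0"
    by (simp add: G_def D'0 D'1 r0)
  have G1: "G (Suc 0) = smult (b 0 - c) [:- c, 1:]"
    using a[of 0] by (simp add: G_def D'0 D'1 D'2 r0 algebra_simps)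
  have "G (Suc (Suc 0)) = [:- bb (Suc 0), 1:] * G (Suc 0)"
    using recG G0 bb[of 0] unfolding ttr_recurrence_def by simp
  then have "G (Suc n) = G (Suc 0) * assoc1 bb aa n"
    using ttr_recurrence_eq_ttr[OF recGSuc, of n] unfolding assoc1_def
    by (simp del: ttr.simps mult_pCons_left)
  moreover have "G (Suc n) = D (Suc n) - smult (r (Suc n)) (D n)"
    by (simp add: G_def D'_def D_def del: ttr.simps mult_pCons_left)
  ultimately show ?thesis
    using G1 by (metis mult_smult_left)
qed

lemma christoffel_assoc1:
  fixes b a bb aa :: "nat \<Rightarrow> complex" and c :: complex
  defines "r \<equiv> \<lambda>k. poly (ttr b a (Suc k)) c / poly (ttr b a k) c"
    and "D \<equiv> \<lambda>k. [:- c, 1:] * assoc1 b a k - ttr b a (Suc k)"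
  assumes SP: "is_SMOP u (ttr b a)" and c: "\<And>n. poly (ttr b a n) c \<noteq> 0"
    and SPt: "is_SMOP (mult_xc c u) (ttr bb aa)"
  shows "smult (b 0 - c) ([:- c, 1:] * assoc1 bb aa n) = D (Suc n) - smult (r (Suc n)) (D n)"
proof -
  have "a (Suc k) = r k * (c - b (Suc k) - r (Suc k))" for k
    unfolding r_def using c[of k] c[of "Suc k"] by (rule ttr_value_ratio)
  moreover have "r 0 = c - b 0"
    by (simp add: r_def)
  ultimately show ?thesis
    unfolding D_def
    using christoffel_ttr_coeffs[OF SP c SPt] unfolding r_def by (intro assoc1_christoffel) auto
qed

lemma is_SMOP_mult_xc_if_kernel:
  assumes SR: "is_SMOP v R" and \<alpha>: "\<And>n. \<alpha> (Suc n) \<noteq> 0"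
    and kernel: "\<And>n. [:- c, 1:] * ttr \<beta> \<alpha> n = R (Suc n) - smult (s n) (R n)"
    and s0: "s 0 \<noteq> 0"
  shows "is_SMOP (mult_xc c v) (ttr \<beta> \<alpha>)"
proof -
  have moment: "fapp (mult_xc c v) (ttr \<beta> \<alpha> n) = fapp v (R (Suc n)) - s n * fapp v (R n)" for n
    by (simp add: fapp_mult_xc kernel fapp_diff fapp_smult del: mult_pCons_left)
  show ?thesis
  proof (rule is_SMOP_ttrI[where \<alpha> = \<alpha>, OF \<alpha>])
    show "fapp (mult_xc c v) (ttr \<beta> \<alpha> n) = 0" if "n \<noteq> 0" for n
      using moment fapp_SMOP_eq_0_iff[OF SR, of n] fapp_SMOP_eq_0_iff[OF SR, of "Suc n"] that
      by simp
    have "fapp (mult_xc c v) (ttr \<beta> \<alpha> 0) \<noteq> 0"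
      using moment[of 0] fapp_SMOP_eq_0_iff[OF SR, of 0] fapp_SMOP_eq_0_iff[OF SR, of 1] s0
      by simp
    then show "mult_xc c v 0 \<noteq> 0"
      by (simp add: fapp_one)
  qed
qed

theorem mainTheorem11:
  fixes u v :: functional and P Pt R :: "nat \<Rightarrow> complex poly"
    and b a bb aa :: "nat \<Rightarrow> complex" and c :: complex
  assumes "quasi_definite u"
    and "is_SMOP u P"
    and "\<forall>n. P n = ttr b a n" and "\<forall>n. a n \<noteq> 0"
    and "\<forall>n. poly (P n) c \<noteq> 0"
    and "is_SMOP (mult_xc c u) Pt"
    and "\<forall>n. Pt n = ttr bb aa n" and "\<forall>n. aa n \<noteq> 0"
    and "\<forall>n. R n = smult (u 0 / mult_xc c u 0)
                       ([:- c, 1:] * assoc1 b a n - P (Suc n))"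
    and "quasi_definite v"
    and "is_SMOP v R"
  shows "is_SMOP (mult_xc c v) (assoc1 bb aa)"
proof -
  define r where "r = (\<lambda>k. poly (ttr b a (Suc k)) c / poly (ttr b a k) c)"
  define D where "D = (\<lambda>k. [:- c, 1:] * assoc1 b a k - ttr b a (Suc k))"
  define \<kappa> where "\<kappa> = u 0 / mult_xc c u 0"
  have P: "P = ttr b a" and Pt: "Pt = ttr bb aa"
    using assms(3,7) by auto
  have c: "poly (ttr b a n) c \<noteq> 0" for n
    using assms(5) P by simp
  have R: "R n = smult \<kappa> (D n)" for n
    using assms(9) P unfolding \<kappa>_def D_def by simp
  have \<kappa>: "\<kappa> * (b 0 - c) = 1"
    using SMOP_0[OF assms(11)] R[of 0] by (simp add: D_def assoc1_def one_pCons)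
  have christoffel:
    "smult (b 0 - c) ([:- c, 1:] * assoc1 bb aa n) = D (Suc n) - smult (r (Suc n)) (D n)" for n
    unfolding r_def D_def
    by (rule christoffel_assoc1[OF assms(2)[unfolded P] c assms(6)[unfolded Pt]])
  have "[:- c, 1:] * assoc1 bb aa n = R (Suc n) - smult (r (Suc n)) (R n)" for n
  proof -
    have "[:- c, 1:] * assoc1 bb aa n = smult \<kappa> (smult (b 0 - c) ([:- c, 1:] * assoc1 bb aa n))"
      by (simp add: \<kappa> del: mult_pCons_left)
    also have "\<dots> = R (Suc n) - smult (r (Suc n)) (R n)"
      unfolding christoffel R by (simp add: smult_diff_right mult.commute)
    finally show ?thesis .
  qed
  moreover have "r (Suc 0) \<noteq> 0"
    using c[of "Suc 0"] c[of "Suc (Suc 0)"] unfolding r_def by (simp del: ttr.simps)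
  ultimately show ?thesis
    unfolding assoc1_def
    by (intro is_SMOP_mult_xc_if_kernel[OF assms(11), of _ c _ "\<lambda>n. r (Suc n)"])
      (use assms(8) in auto)
qed

end
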